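(* Let $p$ be a ProbNetKAT program, $S=\mathcal{S}[\![p]\!]$ and $U$ as defined in the context. Each of the Markov chains $S$, $U$ and $SU$ (matrix product) is monotone: if $(a,b)$ can reach $(a',b')$ in $T\in\{S,U,SU\}$, i.e. $(T^n)_{(a,b),(a',b')}>0$ for some $n\ge 0$, then $b\subseteq b'$.
   Context: $\mathsf{Pk}$ is a finite set of packets; $[\varphi]$ is the Iverson bracket. For a ProbNetKAT program $p$, $\mathcal{B}[\![p]\!]\in[0,1]^{2^{\mathsf{Pk}}\times 2^{\mathsf{Pk}}}$ is its (stochastic) matrix semantics, where $\mathcal{B}[\![p]\!]_{ab}$ is the probability that $p$ outputs packet set $b$ on input packet set $a$. The small-step matrix on states $(a,b)\in 2^{\mathsf{Pk}}\times 2^{\mathsf{Pk}}$ is $S_{(a,b),(a',b')}=[b'=b\cup a]\,\mathcal{B}[\![p]\!]_{a,a'}$. A state $(a,b)$ is saturated if whenever $(a,b)$ can reach $(a',b')$ in $S$ (i.e. $(S^n)_{(a,b),(a',b')}>0$ for some $n\ge0$) we have $b'=b$. The matrix $U$ is $U_{(a,b),(a',b')}=[b'=b]\cdot[a'=\emptyset]$ if $(a,b)$ is saturated and $U_{(a,b),(a',b')}=[b'=b]\cdot[a'=a]$ otherwise. *)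

theory Defs
  imports Complex_Main
begin

type_synonym ('f,'v) pkt = "'f \<Rightarrow> 'v"

datatype ('f,'v) pred =
    PFalse
  | PTrue
  | PTest 'f 'v
  | PNot "('f,'v) pred"
  | PAnd "('f,'v) pred" "('f,'v) pred"
  | POr "('f,'v) pred" "('f,'v) pred"

datatype ('f,'v) prog =
    Pred "('f,'v) pred"
  | Assign 'f 'v
  | Par "('f,'v) prog" "('f,'v) prog"
  | Seq "('f,'v) prog" "('f,'v) prog"
  | Choice "('f,'v) prog" real "('f,'v) prog"
  | Star "('f,'v) prog"

abbreviation Drop where "Drop \<equiv> Pred PFalse"
abbreviation Skip where "Skip \<equiv> Pred PTrue"

fun wf_prog :: "('f,'v) prog \<Rightarrow> bool" where
  "wf_prog (Pred t) = True"
| "wf_prog (Assign f n) = True"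
| "wf_prog (Par p q) = (wf_prog p \<and> wf_prog q)"
| "wf_prog (Seq p q) = (wf_prog p \<and> wf_prog q)"
| "wf_prog (Choice p r q) = (0 \<le> r \<and> r \<le> 1 \<and> wf_prog p \<and> wf_prog q)"
| "wf_prog (Star p) = wf_prog p"

fun holds :: "('f,'v) pred \<Rightarrow> ('f,'v) pkt \<Rightarrow> bool" where
  "holds PFalse \<pi> = False"
| "holds PTrue \<pi> = True"
| "holds (PTest f n) \<pi> = (\<pi> f = n)"
| "holds (PNot t) \<pi> = (\<not> holds t \<pi>)"
| "holds (PAnd t u) \<pi> = (holds t \<pi> \<and> holds u \<pi>)"
| "holds (POr t u) \<pi> = (holds t \<pi> \<or> holds u \<pi>)"

type_synonym 'i mat = "'i \<Rightarrow> 'i \<Rightarrow> real"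

definition mmult :: "('i::finite) mat \<Rightarrow> 'i mat \<Rightarrow> 'i mat" where
  "mmult A B = (\<lambda>i k. \<Sum>j\<in>UNIV. A i j * B j k)"

definition mid :: "('i::finite) mat" where
  "mid = (\<lambda>i j. if i = j then 1 else 0)"

primrec mpow :: "('i::finite) mat \<Rightarrow> nat \<Rightarrow> 'i mat" where
  "mpow A 0 = mid"
| "mpow A (Suc n) = mmult (mpow A n) A"

definition reach :: "('i::finite) mat \<Rightarrow> 'i \<Rightarrow> 'i \<Rightarrow> bool" where
  "reach T s s' = (\<exists>n. mpow T n s s' > 0)"

text \<open>Big-step matrix semantics B[[p]] on packet sets.  The star is the limit
of the approximants p^(0) = skip, p^(n+1) = skip & p ; p^(n).\<close>

fun Bsem :: "('f::finite,'v::finite) prog \<Rightarrow> ('f,'v) pkt set mat" where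
  "Bsem (Pred t) = (\<lambda>a b. if b = {\<pi>\<in>a. holds t \<pi>} then 1 else 0)"
| "Bsem (Assign f n) = (\<lambda>a b. if b = (\<lambda>\<pi>. \<pi>(f := n)) ` a then 1 else 0)"
| "Bsem (Par p q) = (\<lambda>a b. \<Sum>c\<in>UNIV. \<Sum>d\<in>UNIV.
      (if c \<union> d = b then 1 else 0) * Bsem p a c * Bsem q a d)"
| "Bsem (Seq p q) = mmult (Bsem p) (Bsem q)"
| "Bsem (Choice p r q) = (\<lambda>a b. r * Bsem p a b + (1 - r) * Bsem q a b)"
| "Bsem (Star p) = (\<lambda>a b. lim (\<lambda>n. ((\<lambda>M. (\<lambda>a' b'. \<Sum>c\<in>UNIV. \<Sum>d\<in>UNIV.
      (if c \<union> d = b' then 1 else 0) * (if c = a' then 1 else 0) * mmult (Bsem p) M a' d)) ^^ n)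
      (\<lambda>a' b'. if b' = a' then 1 else 0) a b))"

definition Ssmall :: "('f::finite,'v::finite) prog \<Rightarrow> (('f,'v) pkt set \<times> ('f,'v) pkt set) mat" where
  "Ssmall p = (\<lambda>(a,b) (a',b'). (if b' = b \<union> a then 1 else 0) * Bsem p a a')"

definition saturated :: "('f::finite,'v::finite) prog \<Rightarrow> ('f,'v) pkt set \<times> ('f,'v) pkt set \<Rightarrow> bool" where
  "saturated p s = (\<forall>a' b'. reach (Ssmall p) s (a',b') \<longrightarrow> b' = snd s)"

definition Umat :: "('f::finite,'v::finite) prog \<Rightarrow> (('f,'v) pkt set \<times> ('f,'v) pkt set) mat" where
  "Umat p = (\<lambda>(a,b) (a',b'). if saturated p (a,b)
      then (if b' = b \<and> a' = {} then 1 else 0)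
      else (if b' = b \<and> a' = a then 1 else 0))"

end

theory Submission
  imports Defs
begin

text \<open>Reachability is the reflexive-transitive closure of the support of a
transition matrix, so each chain is monotone as soon as each of its one-step
transitions is: the second component of a state is never shrunk by S (it
becomes b \<union> a) nor by U (it stays b), hence not by SU either. Only the support of
the matrices matters.\<close>

lemma mmult_nonzero_obtain:
  assumes "mmult A B i k \<noteq> 0"
  obtains j where "A i j \<noteq> 0" and "B j k \<noteq> 0"
proof -
  from assms have "\<not> (\<forall>j. A i j * B j k = 0)"
    unfolding mmult_def by (metis (mono_tags) sum.neutral)
  with that show thesis by auto
qed

lemma mmult_support_le:
  assumes "transp R"
    and "\<And>x y. A x y \<noteq> 0 \<Longrightarrow> R x y"
    and "\<And>x y. B x y \<noteq> 0 \<Longrightarrow> R x y"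
  shows "mmult A B x y \<noteq> 0 \<Longrightarrow> R x y"
  by (metis assms mmult_nonzero_obtain transpD)

lemma mpow_support_le:
  assumes "reflp R" and "transp R"
    and support: "\<And>x y. T x y \<noteq> 0 \<Longrightarrow> R x y"
  shows "mpow T n x y \<noteq> 0 \<Longrightarrow> R x y"
proof (induction n arbitrary: y)
  case 0
  then show ?case using \<open>reflp R\<close> by (auto simp: mid_def reflpD split: if_splits)
next
  case (Suc n)
  then obtain j where "mpow T n x j \<noteq> 0" and "T j y \<noteq> 0"
    by (auto elim: mmult_nonzero_obtain)
  then show ?case using Suc.IH support \<open>transp R\<close> by (metis transpD)
qed

lemma reach_support_le:
  assumes "reflp R" and "transp R"
    and "\<And>x y. T x y \<noteq> 0 \<Longrightarrow> R x y"
  shows "reach T x y \<Longrightarrow> R x y"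
  unfolding reach_def using mpow_support_le[OF assms] by (metis less_irrefl)

abbreviation snd_le :: "'a \<times> 'b set \<Rightarrow> 'a \<times> 'b set \<Rightarrow> bool" where
  "snd_le x y \<equiv> snd x \<subseteq> snd y"

lemma reflp_snd_le: "reflp snd_le"
  by (simp add: reflpI)

lemma transp_snd_le: "transp snd_le"
  by (auto intro: transpI)

lemma Ssmall_nonzero_snd_le: "Ssmall p x y \<noteq> 0 \<Longrightarrow> snd_le x y"
  by (cases x; cases y) (auto simp: Ssmall_def split: if_splits)

lemma Umat_nonzero_snd_le: "Umat p x y \<noteq> 0 \<Longrightarrow> snd_le x y"
  by (cases x; cases y) (auto simp: Umat_def split: if_splits)

theorem lemma4p5:
  fixes p :: "('f::finite, 'v::finite) prog"
  assumes "wf_prog p"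
  shows "\<forall>T \<in> {Ssmall p, Umat p, mmult (Ssmall p) (Umat p)}.
           \<forall>a b a' b'. reach T (a, b) (a', b') \<longrightarrow> b \<subseteq> b'"
proof -
  have SU_nonzero_snd_le: "mmult (Ssmall p) (Umat p) x y \<noteq> 0 \<Longrightarrow> snd_le x y" for x y
    using mmult_support_le[OF transp_snd_le Ssmall_nonzero_snd_le Umat_nonzero_snd_le] .
  have "reach T x y \<Longrightarrow> snd_le x y"
    if "T \<in> {Ssmall p, Umat p, mmult (Ssmall p) (Umat p)}" for T x y
    using that reach_support_le[OF reflp_snd_le transp_snd_le]
      Ssmall_nonzero_snd_le Umat_nonzero_snd_le SU_nonzero_snd_le
    by blast
  then show ?thesis by fastforce
qed

end
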